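(* For integers $m\ge1$ let $f_m(x)=\frac{(m-x)^{m-1}}{e^{m-x}(m-1)!}$ for $x\le m$ and $f_m(x)=0$ for $x>m$, and for integers $m\ge2$ and real $z\ge0$ let $b(m,z)$ be the unique real number with $0\le b(m,z)\le z$ and $f_m(1-z)=f_m(1+z-b(m,z))$. There is an absolute constant $C>0$ such that: (i) if $n\ge 20$ and $0\le z\le \frac n{10}$, then $b(n,z)\le \frac z3$ and $\big|b(n,z)-\frac{2z^2}{3(n-1)}\big|\le C\frac{z^3}{n^2}$; (ii) if $n\ge1$ and $|x|\le \frac n3$, then $C^{-1}n^{-1/2}e^{-x^2/n}\le f_n(x)\le C n^{-1/2}e^{-x^2/(3n)}$; (iii) if $x$ is real and $h,H$ are integers with $1\le h\le H\le 10x^2$, then $f_h(x)h^{-2}\le C f_H(x)H^{-2}$; (iv) if $k,n$ are integers with $1\le k\le n$ and $x$ is real, then $f_k(x)\le C (n/k)^{1/2} f_n(x)$.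
   Context: $f_m$ is the density of $X_1+\cdots+X_m$, where the $X_i$ are independent with density $e^{x-1}$ for $x\le 1$ and $0$ for $x>1$. *)

theory Defs
  imports Complex_Main
begin

text \<open>Density of the sum of m i.i.d. variables with density e^(x-1) on x <= 1.\<close>
definition f :: "nat \<Rightarrow> real \<Rightarrow> real" where
  "f m x = (if x \<le> real m then (real m - x) ^ (m - 1) / (exp (real m - x) * fact (m - 1)) else 0)"

definition b :: "nat \<Rightarrow> real \<Rightarrow> real" where
  "b m z = (THE y. 0 \<le> y \<and> y \<le> z \<and> f m (1 - z) = f m (1 + z - y))"

end

theory Submission
  imports Defs
begin

(*
  For x < n the density factors as f_n(x) = A_(n-1) * exp (L_(n-1) (1 - x)), where
  A_m = m^m e^(-m) / m! lies between e^(-1) / sqrt m and 1 / sqrt m by an elementary Stirling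
  estimate, and L_m(s) = m ln (1 + s/m) - s. All four parts then reduce to Taylor bounds on
  ln (1 + v).
  (i) With m = n - 1, b(n,z) - z is the other point of the level set of L_m through z; as L_m
  is strictly increasing on (-m, 0], cubic and quartic expansions trap b between
  2z^2/(3m) - 2z^3/m^2 and 2z^2/(3m) + 2z^3/m^2.
  (ii) is the quadratic expansion of n (ln (1 + v) - v) at v = -x/n.
  (iii), (iv): L_m(s) increases with m, so f_h(x) <= 5 sqrt (H/h) e^(-D) f_H(x) with
  D = L_(H-1)(1 - x) - L_(h-1)(1 - x) >= 0. When H <= 10 x^2 the gap D is at least
  sqrt (H/h) / 160, which absorbs the polynomial factor (H/h)^(5/2) needed in (iii).
*)

section \<open>Taylor bounds for the logarithm\<close>

lemma min_at_zero_of_derivative_sign: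
  fixes g g' :: "real \<Rightarrow> real"
  assumes der: "\<And>t. lo < t \<Longrightarrow> t < hi \<Longrightarrow> (g has_real_derivative g' t) (at t)"
    and nonpos: "\<And>t. lo < t \<Longrightarrow> t \<le> 0 \<Longrightarrow> g' t \<le> 0"
    and nonneg: "\<And>t. 0 \<le> t \<Longrightarrow> t < hi \<Longrightarrow> 0 \<le> g' t"
    and "lo < 0" "0 < hi" "lo < v" "v < hi"
  shows "g 0 \<le> g v"
proof (cases "0 \<le> v")
  case True
  show ?thesis
  proof (rule DERIV_nonneg_imp_nondecreasing[OF True])
    fix t assume "0 \<le> t" "t \<le> v"
    then show "\<exists>y. (g has_real_derivative y) (at t) \<and> 0 \<le> y"
      using der nonneg assms(4-) by (intro exI[of _ "g' t"]) auto
  qed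
next
  case False
  show ?thesis
  proof (rule DERIV_nonpos_imp_nonincreasing[of v 0 g])
    fix t assume "v \<le> t" "t \<le> 0"
    then show "\<exists>y. (g has_real_derivative y) (at t) \<and> y \<le> 0"
      using der nonpos assms(4-) by (intro exI[of _ "g' t"]) auto
  qed (use False in auto)
qed

lemma ln_one_plus_le_cubic:
  fixes v :: real assumes "-1 < v"
  shows "ln (1 + v) \<le> v - v^2/2 + v^3/3"
proof -
  let ?g = "\<lambda>v::real. v - v^2/2 + v^3/3 - ln (1 + v)"
  have "?g 0 \<le> ?g v"
  proof (rule min_at_zero_of_derivative_sign
      [where g' = "\<lambda>t. t^3 / (1 + t)" and lo = "-1" and hi = "v + 1"])
    fix t :: real assume "-1 < t"
    then show "(?g has_real_derivative t^3/(1+t)) (at t)"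
      by (auto intro!: derivative_eq_intros simp: field_simps eval_nat_numeral)
  next
    fix t :: real assume "-1 < t" "t \<le> 0"
    then show "t^3/(1+t) \<le> 0" by (simp add: divide_nonpos_pos power_le_zero_eq)
  qed (use assms in auto)
  then show ?thesis by simp
qed

lemma ln_one_plus_ge_quartic:
  fixes v :: real assumes "0 \<le> v"
  shows "v - v^2/2 + v^3/3 - v^4/4 \<le> ln (1 + v)"
proof -
  let ?g = "\<lambda>v::real. ln (1 + v) - (v - v^2/2 + v^3/3 - v^4/4)"
  have "?g 0 \<le> ?g v"
  proof (rule DERIV_nonneg_imp_nondecreasing[OF assms])
    fix t :: real assume "0 \<le> t"
    then have "(?g has_real_derivative t^4/(1+t)) (at t)"
      by (auto intro!: derivative_eq_intros simp: field_simps eval_nat_numeral)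
    with \<open>0 \<le> t\<close> show "\<exists>y. (?g has_real_derivative y) (at t) \<and> 0 \<le> y" by force
  qed
  then show ?thesis by simp
qed

lemma ln_one_minus_ge_quartic:
  fixes w :: real assumes "0 \<le> w" "w \<le> 1/2"
  shows "- w - w^2/2 - w^3/3 - w^4/2 \<le> ln (1 - w)"
proof -
  let ?g = "\<lambda>w::real. ln (1 - w) + w + w^2/2 + w^3/3 + w^4/2"
  have "?g 0 \<le> ?g w"
  proof (rule DERIV_nonneg_imp_nondecreasing[OF assms(1)])
    fix t :: real assume t: "0 \<le> t" "t \<le> w"
    then have "(?g has_real_derivative t^3 * (1 - 2*t) / (1 - t)) (at t)"
      using assms by (auto intro!: derivative_eq_intros simp: field_simps eval_nat_numeral)
    moreover have "0 \<le> t^3 * (1 - 2*t) / (1 - t)" using t assms by simp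
    ultimately show "\<exists>y. (?g has_real_derivative y) (at t) \<and> 0 \<le> y" by blast
  qed
  then show ?thesis by simp
qed

lemma ln_one_plus_le_quadratic:
  fixes v :: real assumes "-1 < v" "v < 1/2"
  shows "ln (1 + v) \<le> v - v^2/3"
proof -
  let ?g = "\<lambda>v::real. v - v^2/3 - ln (1 + v)"
  have "?g 0 \<le> ?g v"
  proof (rule min_at_zero_of_derivative_sign
      [where g' = "\<lambda>t. t*(1-2*t)/(3*(1 + t))" and lo = "-1" and hi = "1/2"])
    fix t :: real assume "-1 < t"
    then show "(?g has_real_derivative t*(1-2*t)/(3*(1 + t))) (at t)"
      by (auto intro!: derivative_eq_intros simp: field_simps eval_nat_numeral)
  next
    fix t :: real assume "-1 < t" "t \<le> 0"
    then show "t*(1-2*t)/(3*(1 + t)) \<le> 0" by (intro divide_nonpos_pos mult_nonpos_nonneg) auto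
  qed (use assms in auto)
  then show ?thesis by simp
qed

lemma ln_one_plus_ge_quadratic:
  fixes v :: real assumes "-1/2 < v"
  shows "v - v^2 \<le> ln (1 + v)"
proof -
  let ?g = "\<lambda>v::real. ln (1 + v) - (v - v^2)"
  have "?g 0 \<le> ?g v"
  proof (rule min_at_zero_of_derivative_sign
      [where g' = "\<lambda>t. t*(1+2*t)/(1 + t)" and lo = "-1/2" and hi = "v+1"])
    fix t :: real assume "-1/2 < t"
    then show "(?g has_real_derivative t*(1+2*t)/(1 + t)) (at t)"
      by (auto intro!: derivative_eq_intros simp: field_simps eval_nat_numeral)
  next
    fix t :: real assume "-1/2 < t" "t \<le> 0"
    then show "t*(1+2*t)/(1 + t) \<le> 0" by (intro divide_nonpos_pos mult_nonpos_nonneg) auto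
  qed (use assms in auto)
  then show ?thesis by simp
qed

lemma ln_one_plus_ge_pade:
  fixes v :: real assumes "0 \<le> v"
  shows "2*v/(2+v) \<le> ln (1 + v)"
proof -
  let ?g = "\<lambda>v::real. ln (1 + v) - 2*v/(2+v)"
  have "?g 0 \<le> ?g v"
  proof (rule DERIV_nonneg_imp_nondecreasing[OF assms])
    fix t :: real assume "0 \<le> t"
    have der: "(?g has_real_derivative 1/(1+t) - 4/(2+t)^2) (at t)"
      by (rule derivative_eq_intros refl | (use \<open>0 \<le> t\<close> in simp; fail))+
        (use \<open>0 \<le> t\<close> in \<open>simp add: field_simps power2_eq_square\<close>)
    have "4 * (1 + t) \<le> (2 + t)^2" by (simp add: power2_eq_square algebra_simps)
    then have "4/(2+t)^2 \<le> 1/(1+t)" using \<open>0 \<le> t\<close> by (simp add: field_simps)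
    with der show "\<exists>y. (?g has_real_derivative y) (at t) \<and> 0 \<le> y" by force
  qed
  then show ?thesis by simp
qed

lemma ln_one_minus_add_two_le:
  fixes u :: real assumes "0 \<le> u" "u < 1"
  shows "ln (1 - u) + 2*u \<le> ln (1 + u)"
proof -
  let ?g = "\<lambda>u::real. ln (1 + u) - ln (1 - u) - 2*u"
  have "?g 0 \<le> ?g u"
  proof (rule DERIV_nonneg_imp_nondecreasing[OF assms(1)])
    fix t :: real assume t: "0 \<le> t" "t \<le> u"
    then have "(?g has_real_derivative 2 * t^2 / ((1+t) * (1-t))) (at t)"
      using assms by (auto intro!: derivative_eq_intros simp: field_simps power2_eq_square)
    moreover have "0 \<le> 2 * t^2 / ((1+t) * (1-t))" using t assms by simp
    ultimately show "\<exists>y. (?g has_real_derivative y) (at t) \<and> 0 \<le> y" by blast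
  qed
  then show ?thesis by simp
qed

section \<open>A Stirling estimate\<close>

(* The excess 1/(2m(m+1)) = 1/(2m) - 1/(2(m+1)) telescopes in ln_fact_bounds. *)
lemma ln_succ_minus_ln_bounds:
  fixes m :: nat assumes "1 \<le> m"
  shows "1 \<le> (real m + 1/2) * (ln (real m + 1) - ln (real m))"
    and "(real m + 1/2) * (ln (real m + 1) - ln (real m)) \<le> 1 + 1/(2*real m*(real m + 1))"
proof -
  have m: "1 \<le> real m" using assms by simp
  define v where "v = 1 / real m"
  have v: "0 < v" "v \<le> 1" using m by (auto simp: v_def)
  have "ln (real m + 1) - ln (real m) = ln ((real m + 1) / real m)" using m by (simp add: ln_div)
  also have "(real m + 1) / real m = 1 + v" using m by (simp add: v_def field_simps)
  finally have ln_eq: "ln (real m + 1) - ln (real m) = ln (1 + v)" .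
  have "(real m + 1/2) * (2*v/(2+v)) = 1" using m by (simp add: v_def field_simps)
  moreover have "(real m + 1/2) * (2*v/(2+v)) \<le> (real m + 1/2) * ln (1 + v)"
    using ln_one_plus_ge_pade[of v] v m by (intro mult_left_mono) auto
  ultimately show "1 \<le> (real m + 1/2) * (ln (real m + 1) - ln (real m))" unfolding ln_eq by linarith
  have "(real m + 1/2) * ln (1 + v) \<le> (real m + 1/2) * (v - v^2/2 + v^3/3)"
    using ln_one_plus_le_cubic[of v] v m by (intro mult_left_mono) auto
  also have "\<dots> = 1 + 1/(12*real m^2) + 1/(6*real m^3)"
    using m by (simp add: v_def field_simps eval_nat_numeral)
  also have "\<dots> \<le> 1 + 1/(2*real m*(real m + 1))"
  proof -
    have "1/(6*real m^3) \<le> 1/(6*real m^2)"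
      using m by (intro divide_left_mono mult_left_mono) (auto simp: power_increasing)
    moreover have "1/(12*real m^2) + 1/(6*real m^2) = 1/(4*real m^2)" using m by (simp add: field_simps)
    moreover have "1/(4*real m^2) \<le> 1/(2*real m*(real m + 1))"
      using m by (intro divide_left_mono) (auto simp: power2_eq_square)
    ultimately show ?thesis by linarith
  qed
  finally show "(real m + 1/2) * (ln (real m + 1) - ln (real m)) \<le> 1 + 1/(2*real m*(real m + 1))"
    by (simp add: ln_eq)
qed

lemma ln_fact_bounds:
  fixes m :: nat assumes "1 \<le> m"
  shows "ln (fact m :: real) \<le> 1 + (real m + 1/2) * ln (real m) - real m"
    and "(real m + 1/2) * ln (real m) - real m + 1/2 + 1/(2*real m) \<le> ln (fact m :: real)"
  using assms
proof (induction m rule: nat_induct_at_least)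
  case base
  { case 1 show ?case by simp }
  { case 2 show ?case by simp }
next
  case (Suc m)
  note step = ln_succ_minus_ln_bounds[OF Suc.hyps]
  have ln_fact: "ln (fact (Suc m) :: real) = ln (real m + 1) + ln (fact m)"
    by (simp add: ln_mult add.commute)
  have r: "real (Suc m) = real m + 1" by simp
  { case 1
    have "ln (real m + 1) + (1 + (real m + 1/2) * ln (real m) - real m)
        \<le> 1 + (real m + 1 + 1/2) * ln (real m + 1) - (real m + 1)"
      using step(1) by (simp add: algebra_simps)
    then show ?case unfolding ln_fact r using Suc.IH(1) by linarith
  }
  { case 2
    have "1/(2*real m) - 1/(2*(real m + 1)) = 1/(2*real m*(real m + 1))"
      using Suc.hyps by (simp add: field_simps)
    then have "(real m + 1 + 1/2) * ln (real m + 1) - (real m + 1) + 1/2 + 1/(2*(real m + 1))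
        \<le> ln (real m + 1) + ((real m + 1/2) * ln (real m) - real m + 1/2 + 1/(2*real m))"
      using step(2) by (simp add: algebra_simps)
    then show ?case unfolding ln_fact r using Suc.IH(2) by linarith
  }
qed

definition stirling_ratio :: "nat \<Rightarrow> real" where
  "stirling_ratio m = real m ^ m * exp (- real m) / fact m"

lemma stirling_ratio_pos: "0 < stirling_ratio m"
  by (cases "m = 0") (auto simp: stirling_ratio_def)

lemma stirling_ratio_eq_exp:
  assumes "1 \<le> m"
  shows "stirling_ratio m = exp (real m * ln (real m) - real m - ln (fact m))"
proof -
  have "exp (real m * ln (real m)) = real m ^ m" using assms by (simp add: exp_of_nat_mult)
  moreover have "exp (ln (fact m)) = (fact m :: real)" by simp
  moreover have "exp (real m * ln (real m) - real m - ln (fact m))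
      = exp (real m * ln (real m)) * exp (- real m) / exp (ln (fact m))"
    by (simp add: exp_diff exp_minus exp_add field_simps)
  ultimately show ?thesis by (simp add: stirling_ratio_def)
qed

lemma stirling_ratio_bounds:
  fixes m :: nat assumes "1 \<le> m"
  shows "exp (-1) / sqrt (real m) \<le> stirling_ratio m" and "stirling_ratio m \<le> 1 / sqrt (real m)"
proof -
  have sqrt_eq: "sqrt (real m) = exp (ln (real m) / 2)"
    using assms by (simp add: ln_sqrt[symmetric])
  note ln_fact = ln_fact_bounds[OF assms]
  have split: "(real m + 1/2) * ln (real m) = real m * ln (real m) + ln (real m)/2"
    by (simp add: algebra_simps)
  have "-1 - ln (real m)/2 \<le> real m * ln (real m) - real m - ln (fact m)"
    using ln_fact(1) split by linarith
  then show "exp (-1) / sqrt (real m) \<le> stirling_ratio m"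
    by (simp add: stirling_ratio_eq_exp[OF assms] sqrt_eq exp_diff[symmetric])
  have "0 \<le> 1/(2*real m)" by simp
  have "real m * ln (real m) - real m - ln (fact m) \<le> - (ln (real m)/2)"
    using ln_fact(2) split \<open>0 \<le> 1/(2*real m)\<close> by linarith
  then have "stirling_ratio m \<le> exp (- (ln (real m)/2))"
    by (simp add: stirling_ratio_eq_exp[OF assms])
  then show "stirling_ratio m \<le> 1 / sqrt (real m)"
    by (simp add: sqrt_eq exp_minus inverse_eq_divide)
qed

lemma stirling_ratio_bounds_Suc:
  fixes m :: nat
  shows "exp (-1) / sqrt (real m + 1) \<le> stirling_ratio m"
    and "stirling_ratio m \<le> sqrt 2 / sqrt (real m + 1)"
proof -
  show "exp (-1) / sqrt (real m + 1) \<le> stirling_ratio m"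
  proof (cases "m = 0")
    case False
    then have "exp (-1) / sqrt (real m + 1) \<le> exp (-1) / sqrt (real m)"
      by (intro divide_left_mono) auto
    then show ?thesis using stirling_ratio_bounds(1)[of m] False by simp
  qed (simp add: stirling_ratio_def)
  show "stirling_ratio m \<le> sqrt 2 / sqrt (real m + 1)"
  proof (cases "m = 0")
    case False
    have "sqrt (real m + 1) \<le> sqrt 2 * sqrt (real m)"
      unfolding real_sqrt_mult[symmetric] using False by simp
    then have "1 / sqrt (real m) \<le> sqrt 2 / sqrt (real m + 1)"
      using False by (simp add: field_simps)
    then show ?thesis using stirling_ratio_bounds(2)[of m] False by simp
  qed (simp add: stirling_ratio_def)
qed

section \<open>The logarithmic kernel of the density\<close>

(* For m = 0 this is -s (as 0 * ln s = 0), so f_eq_log_kernel covers n = 1 as well. *)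
definition log_kernel :: "nat \<Rightarrow> real \<Rightarrow> real" where
  "log_kernel m s = real m * ln (real m + s) - real m * ln (real m) - s"

lemma f_nonneg: "0 \<le> f n x"
  by (simp add: f_def)

lemma f_eq_zero:
  assumes "1 \<le> n" "\<not> (x < real n \<or> n = 1 \<and> x \<le> 1)"
  shows "f n x = 0"
  using assms by (auto simp: f_def)

lemma f_eq_log_kernel:
  assumes n: "1 \<le> n" and x: "x < real n \<or> n = 1 \<and> x \<le> 1"
  shows "f n x = stirling_ratio (n - 1) * exp (log_kernel (n - 1) (1 - x))"
proof (cases "n = 1")
  case True
  with x have "x \<le> 1" by auto
  with True show ?thesis
    by (simp add: f_def stirling_ratio_def log_kernel_def exp_minus field_simps mult_exp_exp)
next
  case False
  define m where "m = n - 1"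
  have m: "1 \<le> m" "real n = real m + 1" using False n by (auto simp: m_def)
  have pos: "0 < real n - x" using x False by auto
  have "real m * ln (real n - x) - (real n - x)
      = real m * ln (real m) - real m + log_kernel m (1 - x)"
    unfolding log_kernel_def m(2) by (simp add: algebra_simps)
  then have "exp (real m * ln (real n - x)) / exp (real n - x)
      = exp (real m * ln (real m)) / exp (real m) * exp (log_kernel m (1 - x))"
    by (metis exp_add exp_diff)
  moreover have "exp (real m * ln (real n - x)) = (real n - x) ^ m"
    using pos by (simp add: exp_of_nat_mult)
  moreover have "exp (real m * ln (real m)) = real m ^ m"
    using m(1) by (simp add: exp_of_nat_mult)
  ultimately have eq: "(real n - x) ^ m / exp (real n - x)
      = real m ^ m / exp (real m) * exp (log_kernel m (1 - x))"
    by simp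
  have "f n x = (real n - x) ^ m / exp (real n - x) / fact m"
    using pos by (simp add: f_def m_def)
  also have "\<dots> = stirling_ratio m * exp (log_kernel m (1 - x))"
    unfolding eq stirling_ratio_def by (simp add: exp_minus field_simps)
  finally show ?thesis by (simp add: m_def)
qed

lemma log_kernel_zero [simp]: "log_kernel m 0 = 0"
  by (simp add: log_kernel_def)

lemma has_real_derivative_log_kernel:
  assumes "0 < real m + s"
  shows "(log_kernel m has_real_derivative (real m / (real m + s) - 1)) (at s)"
  unfolding log_kernel_def using assms by (auto intro!: derivative_eq_intros)

lemma continuous_on_log_kernel:
  assumes "m = 0 \<or> 0 < real m + lo"
  shows "continuous_on {lo..hi} (log_kernel m)"
proof (cases "m = 0")
  case True
  then show ?thesis by (simp add: log_kernel_def continuous_intros)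
next
  case False
  with assms have "\<forall>s\<in>{lo..hi}. 0 < real m + s" by auto
  then show ?thesis unfolding log_kernel_def by (intro continuous_intros) auto
qed

lemma log_kernel_eq_ln:
  assumes "1 \<le> m" "- real m < s"
  shows "log_kernel m s = real m * (ln (1 + s / real m) - s / real m)"
proof -
  have "1 + s / real m = (real m + s) / real m" using assms by (simp add: field_simps)
  then have "ln (real m + s) = ln (real m) + ln (1 + s / real m)" using assms by (simp add: ln_div)
  then show ?thesis unfolding log_kernel_def using assms by (simp add: algebra_simps)
qed

lemma strict_mono_on_log_kernel:
  assumes "1 \<le> m"
  shows "strict_mono_on {- real m<..0} (log_kernel m)"
proof (rule strict_mono_onI)
  fix s t assume s: "s \<in> {- real m<..0}" and t: "t \<in> {- real m<..0}" and "s < t"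
  show "log_kernel m s < log_kernel m t"
  proof (rule DERIV_pos_imp_increasing_open[OF \<open>s < t\<close>])
    fix r assume "s < r" "r < t"
    then have "0 < real m + r" "r < 0" using s t by auto
    then have "1 < real m / (real m + r)" by (simp add: field_simps)
    then show "\<exists>y. (log_kernel m has_real_derivative y) (at r) \<and> 0 < y"
      using has_real_derivative_log_kernel[OF \<open>0 < real m + r\<close>] by force
  qed (use s continuous_on_log_kernel[of m s t] in auto)
qed

lemma has_real_derivative_log_kernel_diff:
  assumes "0 < real a + r" "0 < real c + r"
  shows "((\<lambda>r. log_kernel c r - log_kernel a r) has_real_derivative
           r * (real c - real a) / ((real c + r) * (real a + r))) (at r)"
proof -
  have "(real c / (real c + r) - 1) - (real a / (real a + r) - 1)
      = r * (real c - real a) / ((real c + r) * (real a + r))"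
    using assms by (simp add: field_simps)
  then show ?thesis
    using DERIV_diff[OF has_real_derivative_log_kernel[OF assms(2)]
                        has_real_derivative_log_kernel[OF assms(1)]]
    by simp
qed

lemma log_kernel_diff_ge_of_nonneg:
  assumes ac: "a \<le> c" and c: "1 \<le> c" and s: "0 \<le> s"
  shows "(real c - real a) * s^2 / (2 * (real c + s) * (real a + s)) \<le> log_kernel c s - log_kernel a s"
proof (cases "s = 0")
  case False
  define P where "P = (real c + s) * (real a + s)"
  have P: "0 < P" using s False c by (simp add: P_def)
  define K where "K = (real c - real a) / (2 * P)"
  let ?G = "\<lambda>r. log_kernel c r - log_kernel a r - K * r^2"
  have "?G 0 \<le> ?G s"
  proof (rule DERIV_nonneg_imp_increasing_open[OF s])
    fix r assume r: "0 < r" "r < s"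
    then have pos: "0 < real a + r" "0 < real c + r" by auto
    have "K * (2 * r) = r * (real c - real a) / P"
      unfolding K_def using P by (simp add: field_simps)
    also have "\<dots> \<le> r * (real c - real a) / ((real c + r) * (real a + r))"
      unfolding P_def using r pos ac by (intro divide_left_mono mult_mono mult_pos_pos) auto
    finally have "K * (2 * r) \<le> r * (real c - real a) / ((real c + r) * (real a + r))" .
    then show "\<exists>y. (?G has_real_derivative y) (at r) \<and> 0 \<le> y"
      using DERIV_diff[OF has_real_derivative_log_kernel_diff[OF pos] DERIV_cmult[OF DERIV_pow[of 2 r], of K]]
      by force
  next
    show "continuous_on {0..s} ?G"
      using continuous_on_log_kernel[of c 0 s] continuous_on_log_kernel[of a 0 s] c
      by (intro continuous_intros) auto
  qed
  moreover have "K * s^2 = (real c - real a) * s^2 / (2 * (real c + s) * (real a + s))"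
    by (simp add: K_def P_def mult.assoc)
  ultimately show ?thesis by simp
qed simp

lemma log_kernel_diff_ge_of_nonpos:
  assumes ac: "a \<le> c" and a: "1 \<le> a" and s: "s \<le> 0" "- real a < s"
  shows "(real c - real a) * s^2 / (2 * real a * real c) \<le> log_kernel c s - log_kernel a s"
proof -
  define K where "K = (real c - real a) / (2 * real a * real c)"
  let ?G = "\<lambda>r. log_kernel c r - log_kernel a r - K * r^2"
  have "?G 0 \<le> ?G s"
  proof (rule DERIV_nonpos_imp_nonincreasing[OF s(1)])
    fix r assume r: "s \<le> r" "r \<le> 0"
    then have pos: "0 < real a + r" "0 < real c + r" using s ac by auto
    have "(real c + r) * (real a + r) \<le> real c * real a"
      using r pos by (intro mult_mono) auto
    then have "(-r) * (real c - real a) / (real c * real a)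
        \<le> (-r) * (real c - real a) / ((real c + r) * (real a + r))"
      using r pos ac by (intro divide_left_mono mult_nonneg_nonneg mult_pos_pos) auto
    moreover have "K * (2 * r) = r * (real c - real a) / (real c * real a)"
      unfolding K_def using a ac by (simp add: field_simps)
    ultimately have "r * (real c - real a) / ((real c + r) * (real a + r)) - K * (2 * r) \<le> 0"
      by (simp add: minus_divide_left[symmetric])
    then show "\<exists>y. (?G has_real_derivative y) (at r) \<and> y \<le> 0"
      using DERIV_diff[OF has_real_derivative_log_kernel_diff[OF pos] DERIV_cmult[OF DERIV_pow[of 2 r], of K]]
      by force
  qed
  then show ?thesis by (simp add: K_def)
qed

lemma log_kernel_mono:
  assumes "a \<le> c" "1 \<le> c" "0 \<le> s \<or> - real a < s"
  shows "log_kernel a s \<le> log_kernel c s"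
proof (cases "0 \<le> s")
  case True
  have "0 \<le> (real c - real a) * s^2 / (2 * (real c + s) * (real a + s))"
    using True assms by simp
  then show ?thesis using log_kernel_diff_ge_of_nonneg[OF assms(1,2) True] by linarith
next
  case False
  with assms have s: "s \<le> 0" "- real a < s" and "1 \<le> a" by auto
  have "0 \<le> (real c - real a) * s^2 / (2 * real a * real c)"
    using assms by simp
  then show ?thesis using log_kernel_diff_ge_of_nonpos[OF assms(1) \<open>1 \<le> a\<close> s] by linarith
qed

section \<open>Comparing densities of different orders\<close>

abbreviation kernel_gap :: "nat \<Rightarrow> nat \<Rightarrow> real \<Rightarrow> real" where
  "kernel_gap h H x \<equiv> log_kernel (H - 1) (1 - x) - log_kernel (h - 1) (1 - x)"

lemma kernel_gap_nonneg:
  assumes "1 \<le> h" "h \<le> H" "x < real h \<or> h = 1 \<and> x \<le> 1"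
  shows "0 \<le> kernel_gap h H x"
proof (cases "h = H")
  case False
  then show ?thesis using assms log_kernel_mono[of "h - 1" "H - 1" "1 - x"] by auto
qed simp

lemma f_le_sqrt_ratio_exp_kernel_gap:
  assumes h: "1 \<le> h" "h \<le> H" and x: "x < real h \<or> h = 1 \<and> x \<le> 1"
  shows "f h x \<le> 5 * sqrt (real H / real h) * exp (- kernel_gap h H x) * f H x"
proof -
  define D where "D = kernel_gap h H x"
  have fh: "f h x = stirling_ratio (h - 1) * exp (log_kernel (h - 1) (1 - x))"
    using f_eq_log_kernel[OF h(1) x] .
  have fH: "f H x = stirling_ratio (H - 1) * exp (log_kernel (H - 1) (1 - x))"
    using f_eq_log_kernel[of H x] h x by (cases "H = 1") auto
  have "exp (log_kernel (h - 1) (1 - x)) = exp (- D) * exp (log_kernel (H - 1) (1 - x))"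
    by (simp add: D_def exp_add[symmetric])
  then have ratio: "f h x = stirling_ratio (h - 1) / stirling_ratio (H - 1) * exp (- D) * f H x"
    unfolding fh fH using stirling_ratio_pos[of "H - 1"] by (simp add: field_simps)
  have "stirling_ratio (h - 1) \<le> sqrt 2 / sqrt (real h)"
    using stirling_ratio_bounds_Suc(2)[of "h - 1"] h by simp
  moreover have "exp (-1) / sqrt (real H) \<le> stirling_ratio (H - 1)"
    using stirling_ratio_bounds_Suc(1)[of "H - 1"] h by simp
  ultimately have "stirling_ratio (h - 1) / stirling_ratio (H - 1)
      \<le> (sqrt 2 / sqrt (real h)) / (exp (-1) / sqrt (real H))"
    using stirling_ratio_pos[of "h - 1"] h by (intro frac_le) auto
  also have "\<dots> = exp 1 * sqrt 2 * sqrt (real H / real h)"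
    using h by (simp add: exp_minus real_sqrt_divide field_simps)
  also have "\<dots> \<le> 5 * sqrt (real H / real h)"
  proof -
    have "exp (1::real) \<le> 3" using exp_le by simp
    moreover have "sqrt (2::real) \<le> 3/2" by (rule real_le_lsqrt) (auto simp: power2_eq_square)
    ultimately have "exp 1 * sqrt 2 \<le> (5::real)" using mult_mono[of "exp 1" 3 "sqrt 2" "3/2"] by simp
    then show ?thesis by (intro mult_right_mono) auto
  qed
  finally have "stirling_ratio (h - 1) / stirling_ratio (H - 1) \<le> 5 * sqrt (real H / real h)" .
  then show ?thesis
    unfolding ratio D_def[symmetric] using f_nonneg[of H x] by (intro mult_right_mono) auto
qed

lemma f_le_sqrt_ratio:
  assumes "1 \<le> k" "k \<le> n"
  shows "f k x \<le> 5 * sqrt (real n / real k) * f n x"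
proof (cases "x < real k \<or> k = 1 \<and> x \<le> 1")
  case True
  have "exp (- kernel_gap k n x) \<le> 1"
    using kernel_gap_nonneg[OF assms True] by simp
  then have "5 * sqrt (real n / real k) * exp (- kernel_gap k n x) * f n x
      \<le> 5 * sqrt (real n / real k) * 1 * f n x"
    using f_nonneg[of n x] by (intro mult_right_mono mult_left_mono) auto
  with f_le_sqrt_ratio_exp_kernel_gap[OF assms True] show ?thesis by simp
next
  case False
  then show ?thesis using assms f_eq_zero[of k x] f_nonneg[of n x] by simp
qed

lemma cube_mul_exp_neg_le:
  fixes r c D :: real
  assumes r: "1 \<le> r" and c: "0 < c" and D: "sqrt r / c \<le> D"
  shows "r^3 * exp (- D) \<le> (6 * c)^6"
proof -
  define t where "t = sqrt r / c"
  have t: "0 \<le> t" using r c by (simp add: t_def)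
  have "(sqrt r)^6 = ((sqrt r)^2)^3" by (simp flip: power_mult)
  also have "\<dots> = r^3" using r by simp
  finally have r3: "r^3 = (6 * c)^6 * (t / 6)^6"
    using c by (simp add: t_def power_mult_distrib power_divide field_simps)
  have "(t / 6)^6 \<le> (1 + t / real (6::nat))^6" using t by (intro power_mono) auto
  also have "\<dots> \<le> exp t" by (rule exp_ge_one_plus_x_over_n_power_n) (use t in auto)
  also have "\<dots> \<le> exp D" using D by (simp add: t_def)
  finally have "r^3 \<le> (6 * c)^6 * exp D" unfolding r3 using c by (intro mult_left_mono) auto
  then have "r^3 * exp (- D) \<le> (6 * c)^6 * exp D * exp (- D)" by (rule mult_right_mono) simp
  then show ?thesis by (simp add: mult.assoc flip: exp_add)
qed

lemma kernel_gap_ge_of_ge_two: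
  assumes x: "2 \<le> x" "x < real h" and hH: "2 * h \<le> H" and Hx: "real H \<le> 10 * x^2"
  shows "real H / real h / 160 \<le> kernel_gap h H x"
proof -
  have h: "2 \<le> real h - 1" "real (h - 1) = real h - 1" "real (H - 1) = real H - 1"
    using x hH by auto
  have "(real (H - 1) - real (h - 1)) * (1 - x)^2 / (2 * real (h - 1) * real (H - 1))
      \<le> kernel_gap h H x"
    using x hH h by (intro log_kernel_diff_ge_of_nonpos) auto
  moreover have "(real H / 2) * (real H / 40) / (2 * real h * real H)
      \<le> (real (H - 1) - real (h - 1)) * (1 - x)^2 / (2 * real (h - 1) * real (H - 1))"
  proof (rule frac_le)
    have "(x / 2)^2 \<le> (x - 1)^2" using x by (intro power_mono) auto
    then have "x^2 / 4 \<le> (1 - x)^2" by (simp add: power2_eq_square algebra_simps)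
    then show "(real H / 2) * (real H / 40) \<le> (real (H - 1) - real (h - 1)) * (1 - x)^2"
      using hH Hx h by (intro mult_mono) auto
    show "2 * real (h - 1) * real (H - 1) \<le> 2 * real h * real H"
      using h hH by (intro mult_mono) auto
  qed (use h hH in auto)
  moreover have "(real H / 2) * (real H / 40) / (2 * real h * real H) = real H / real h / 160"
    using h hH by (simp add: field_simps)
  ultimately show ?thesis by linarith
qed

lemma kernel_gap_ge_of_le_neg_two:
  assumes x: "x \<le> -2" and h: "1 \<le> h" "2 * h \<le> H"
  shows "real H * x^2 / (4 * (real H - x) * (real h - x))
           \<le> kernel_gap h H x"
proof -
  have r: "real (h - 1) = real h - 1" "real (H - 1) = real H - 1" using h by auto
  have "(real (H - 1) - real (h - 1)) * (1 - x)^2 / (2 * (real (H - 1) + (1 - x)) * (real (h - 1) + (1 - x)))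
      \<le> kernel_gap h H x"
    using x h by (intro log_kernel_diff_ge_of_nonneg) auto
  moreover have "real H * x^2 / (4 * (real H - x) * (real h - x))
      \<le> (real (H - 1) - real (h - 1)) * (1 - x)^2 / (2 * (real (H - 1) + (1 - x)) * (real (h - 1) + (1 - x)))"
  proof -
    have "(- x)^2 \<le> (1 - x)^2" using x by (intro power_mono) auto
    then have "x^2 \<le> (1 - x)^2" by simp
    then have "real H / 2 * x^2 \<le> (real H - real h) * (1 - x)^2"
      using h by (intro mult_mono) auto
    then have "real H / 2 * x^2 / (2 * (real H - x) * (real h - x))
        \<le> (real H - real h) * (1 - x)^2 / (2 * (real H - x) * (real h - x))"
      using x h by (intro divide_right_mono) auto
    then show ?thesis unfolding r by (simp add: algebra_simps)
  qed
  ultimately show ?thesis by linarith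
qed

lemma sqrt_ratio_le_gap_bound:
  fixes X :: real
  assumes X: "0 < X" and h: "1 \<le> h" "h \<le> H" and HX: "real H \<le> 10 * X^2"
  shows "sqrt (real H / real h) / 160 \<le> real H * X^2 / (4 * (real H + X) * (real h + X))"
proof -
  define r where "r = real H / real h"
  have r: "1 \<le> r" "r \<le> real H" using h by (auto simp: r_def field_simps)
  have sqrt_r: "sqrt r \<le> r" using r by (intro real_le_lsqrt) (auto simp: power2_eq_square)
  have hp: "0 < real h" using h by simp
  have "sqrt r / 160 \<le> r / 160" using sqrt_r by simp
  consider "X \<le> real h" | "real h < X" "X \<le> real H" | "real H < X" by linarith
  then show ?thesis
  proof cases
    case 1
    have "sqrt r / 160 \<le> real H * X^2 / (4 * (2 * real H) * (2 * real h))"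
      using \<open>sqrt r / 160 \<le> r / 160\<close> HX hp h by (simp add: r_def field_simps)
    also have "\<dots> \<le> real H * X^2 / (4 * (real H + X) * (real h + X))"
      using 1 h X by (intro divide_left_mono mult_mono) auto
    finally show ?thesis unfolding r_def .
  next
    case 2
    have "sqrt r \<le> 10 * X"
      using r HX X by (intro real_le_lsqrt) (auto simp: power2_eq_square)
    then have "sqrt r / 160 \<le> real H * X^2 / (4 * (2 * real H) * (2 * X))"
      using X h by (simp add: field_simps power2_eq_square)
    also have "\<dots> \<le> real H * X^2 / (4 * (real H + X) * (real h + X))"
      using 2 h X by (intro divide_left_mono mult_mono) auto
    finally show ?thesis unfolding r_def .
  next
    case 3
    have "sqrt r / 160 \<le> real H * X^2 / (4 * (2 * X) * (2 * X))"
      using \<open>sqrt r / 160 \<le> r / 160\<close> r X by (simp add: field_simps power2_eq_square)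
    also have "\<dots> \<le> real H * X^2 / (4 * (real H + X) * (real h + X))"
      using 3 h X by (intro divide_left_mono mult_mono) auto
    finally show ?thesis unfolding r_def .
  qed
qed

lemma kernel_gap_ge_sqrt_ratio:
  assumes h: "1 \<le> h" "2 * h \<le> H" and Hx: "real H \<le> 10 * x^2" "40 \<le> real H"
    and x: "x < real h \<or> h = 1 \<and> x \<le> 1"
  shows "sqrt (real H / real h) / 160 \<le> kernel_gap h H x"
proof -
  have "2^2 \<le> \<bar>x\<bar>^2" using Hx by simp
  then have "2 \<le> \<bar>x\<bar>" by (rule power2_le_imp_le) simp
  then consider "2 \<le> x" | "x \<le> -2" by linarith
  then show ?thesis
  proof cases
    case 1
    with x have "x < real h" by auto
    have "sqrt (real H / real h) \<le> real H / real h"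
      using h by (intro real_le_lsqrt) (auto simp: power2_eq_square field_simps)
    then have "sqrt (real H / real h) / 160 \<le> real H / real h / 160" by simp
    then show ?thesis
      using kernel_gap_ge_of_ge_two[OF 1 \<open>x < real h\<close> h(2) Hx(1)] by (rule order_trans)
  next
    case 2
    have "sqrt (real H / real h) / 160 \<le> real H * (- x)^2 / (4 * (real H + - x) * (real h + - x))"
      using 2 h Hx by (intro sqrt_ratio_le_gap_bound) auto
    also have "\<dots> = real H * x^2 / (4 * (real H - x) * (real h - x))" by simp
    also have "\<dots> \<le> kernel_gap h H x"
      by (rule kernel_gap_ge_of_le_neg_two[OF 2 h])
    finally show ?thesis .
  qed
qed

lemma cube_ratio_mul_exp_neg_kernel_gap_le:
  assumes h: "1 \<le> h" "h \<le> H" and Hx: "real H \<le> 10 * x^2"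
    and x: "x < real h \<or> h = 1 \<and> x \<le> 1"
  shows "(real H / real h)^3 * exp (- kernel_gap h H x) \<le> 960^6"
proof -
  have r: "1 \<le> real H / real h" using h by (simp add: field_simps)
  show ?thesis
  proof (cases "2 * h \<le> H \<and> 40 \<le> real H")
    case True
    then have "sqrt (real H / real h) / 160 \<le> kernel_gap h H x"
      using h Hx x by (intro kernel_gap_ge_sqrt_ratio) auto
    from cube_mul_exp_neg_le[OF r _ this] show ?thesis by simp
  next
    case False
    then have "real H / real h \<le> 40" using h by (auto simp: field_simps)
    then have "(real H / real h)^3 \<le> 40^3" using r by (intro power_mono) auto
    moreover have "exp (- kernel_gap h H x) \<le> 1" using kernel_gap_nonneg[OF h x] by simp
    ultimately have "(real H / real h)^3 * exp (- kernel_gap h H x) \<le> 40^3 * 1"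
      by (intro mult_mono) auto
    then show ?thesis by simp
  qed
qed

lemma f_div_square_le:
  assumes h: "1 \<le> h" "h \<le> H" and Hx: "real H \<le> 10 * x^2"
  shows "f h x / (real h)^2 \<le> 5 * 960^6 * f H x / (real H)^2"
proof (cases "x < real h \<or> h = 1 \<and> x \<le> 1")
  case True
  define D where "D = kernel_gap h H x"
  define r where "r = real H / real h"
  have r: "1 \<le> r" using h by (simp add: r_def field_simps)
  have "sqrt r \<le> r" using r by (intro real_le_lsqrt) (auto simp: power2_eq_square)
  have "f h x \<le> 5 * sqrt r * exp (- D) * f H x"
    using f_le_sqrt_ratio_exp_kernel_gap[OF h True] by (simp add: r_def D_def)
  also have "\<dots> \<le> 5 * r * exp (- D) * f H x"
    using \<open>sqrt r \<le> r\<close> f_nonneg[of H x] by (intro mult_right_mono) auto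
  also have "\<dots> = 5 * (r^3 * exp (- D)) / r^2 * f H x"
    using r by (simp add: power2_eq_square power3_eq_cube)
  also have "\<dots> \<le> 5 * 960^6 / r^2 * f H x"
    using cube_ratio_mul_exp_neg_kernel_gap_le[OF h Hx True] f_nonneg[of H x] r
    by (intro mult_right_mono divide_right_mono mult_left_mono) (auto simp: r_def D_def)
  also have "\<dots> = 5 * 960^6 * f H x / (real H)^2 * (real h)^2"
    using h by (simp add: r_def field_simps)
  finally show ?thesis using h by (simp add: field_simps)
next
  case False
  then show ?thesis using h f_eq_zero[of h x] f_nonneg[of H x] by simp
qed

section \<open>Gaussian bounds\<close>

lemma f_eq_stirling_ratio_exp:
  assumes n: "1 \<le> n" and x: "x < real n"
  shows "f n x = stirling_ratio n * exp (real n * ln (1 - x / real n) + x) / (1 - x / real n)"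
proof -
  have np: "0 < real n" using n by simp
  have y: "0 < 1 - x / real n" using x np by (simp add: field_simps)
  have fact_n: "fact n = real n * fact (n - 1)"
    using n by (metis Suc_diff_1 fact_Suc less_le_trans of_nat_Suc zero_less_one)
  have pow_n: "(real n - x) ^ n = (real n - x) * (real n - x) ^ (n - 1)"
    using n by (metis Suc_diff_1 less_le_trans power_Suc zero_less_one)
  have "exp (real n * ln (1 - x / real n)) = (1 - x / real n) ^ n"
    using y by (simp add: exp_of_nat_mult)
  also have "real n ^ n * \<dots> = (real n - x) ^ n"
    using np by (simp add: power_mult_distrib[symmetric] field_simps)
  finally have "stirling_ratio n * exp (real n * ln (1 - x / real n) + x)
      = (real n - x) ^ n / exp (real n - x) / fact n"
    by (simp add: stirling_ratio_def exp_add exp_diff exp_minus field_simps)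
  also have "\<dots> = (1 - x / real n) * f n x"
    using x np unfolding fact_n pow_n by (simp add: f_def field_simps)
  finally show ?thesis using y by (metis nonzero_mult_div_cancel_left less_irrefl)
qed

lemma f_gaussian_bounds:
  assumes n: "1 \<le> n" and x: "\<bar>x\<bar> \<le> real n / 3"
  shows "1/4 * (1 / sqrt (real n)) * exp (- (x^2) / real n) \<le> f n x"
    and "f n x \<le> 3/2 * (1 / sqrt (real n)) * exp (- (x^2) / (3 * real n))"
proof -
  have np: "0 < real n" using n by simp
  define v where "v = - x / real n"
  have v: "-1/3 \<le> v" "v \<le> 1/3" using x np unfolding v_def by (auto simp: field_simps abs_le_iff)
  have exponent: "real n * ln (1 - x / real n) + x = real n * (ln (1 + v) - v)"
    unfolding v_def using np by (simp add: field_simps)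
  have nv: "real n * v^2 = x^2 / real n" unfolding v_def using np by (simp add: field_simps power2_eq_square)
  have "real n * (v - v^2) \<le> real n * ln (1 + v)"
    using v ln_one_plus_ge_quadratic[of v] np by (intro mult_left_mono) auto
  then have lower: "- (x^2) / real n \<le> real n * (ln (1 + v) - v)"
    using nv by (simp add: algebra_simps)
  have "real n * ln (1 + v) \<le> real n * (v - v^2/3)"
    using v ln_one_plus_le_quadratic[of v] np by (intro mult_left_mono) auto
  then have upper: "real n * (ln (1 + v) - v) \<le> - (x^2) / (3 * real n)"
    using nv by (simp add: algebra_simps)
  have rep: "f n x = stirling_ratio n * exp (real n * (ln (1 + v) - v)) / (1 + v)"
    using f_eq_stirling_ratio_exp[OF n] x np exponent by (simp add: v_def)
  have "1/3 \<le> exp (-1::real)" using exp_le by (simp add: exp_minus field_simps)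
  then have "1/4 * (1 / sqrt (real n)) * exp (- (x^2) / real n)
      \<le> 3/4 * exp (-1) * (1 / sqrt (real n)) * exp (- (x^2) / real n)"
    by (intro mult_right_mono) auto
  also have "\<dots> = (exp (-1) / sqrt (real n)) * exp (- (x^2) / real n) / (4/3)" by simp
  also have "\<dots> \<le> stirling_ratio n * exp (real n * (ln (1 + v) - v)) / (1 + v)"
    using stirling_ratio_bounds(1)[OF n] lower v stirling_ratio_pos[of n]
    by (intro frac_le mult_mono) (auto simp: less_imp_le)
  finally show "1/4 * (1 / sqrt (real n)) * exp (- (x^2) / real n) \<le> f n x"
    unfolding rep .
  have "f n x \<le> (1 / sqrt (real n)) * exp (- (x^2) / (3 * real n)) / (2/3)"
    unfolding rep using stirling_ratio_bounds(2)[OF n] upper v stirling_ratio_pos[of n]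
    by (intro frac_le mult_mono) auto
  then show "f n x \<le> 3/2 * (1 / sqrt (real n)) * exp (- (x^2) / (3 * real n))" by simp
qed

section \<open>The reflection point b\<close>

lemma b_spec:
  assumes n: "2 \<le> n" and z: "0 \<le> z" "z < real n - 1"
  shows "0 \<le> b n z" "b n z \<le> z" "log_kernel (n - 1) (b n z - z) = log_kernel (n - 1) z"
proof -
  define m where "m = n - 1"
  have m: "1 \<le> m" "real m = real n - 1" using n by (auto simp: m_def)
  have crossing: "f n (1 - z) = f n (1 + z - y) \<longleftrightarrow> log_kernel m (y - z) = log_kernel m z"
    if "0 \<le> y" "y \<le> z" for y
  proof -
    have "f n (1 - z) = stirling_ratio m * exp (log_kernel m z)"
      using f_eq_log_kernel[of n "1 - z"] n z by (simp add: m_def)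
    moreover have "f n (1 + z - y) = stirling_ratio m * exp (log_kernel m (y - z))"
      using f_eq_log_kernel[of n "1 + z - y"] n z that by (simp add: m_def)
    ultimately show ?thesis using stirling_ratio_pos[of m] by auto
  qed
  define u where "u = z / real m"
  have u: "0 \<le> u" "u < 1" using z m by (auto simp: u_def field_simps)
  have L_z: "log_kernel m z = real m * (ln (1 + u) - u)"
    using log_kernel_eq_ln[of m z] m z by (simp add: u_def)
  have L_neg_z: "log_kernel m (0 - z) = real m * (ln (1 - u) + u)"
    using log_kernel_eq_ln[of m "- z"] m z by (simp add: u_def)
  have "\<exists>y. 0 \<le> y \<and> y \<le> z \<and> log_kernel m (y - z) = log_kernel m z"
  proof (rule IVT')
    show "log_kernel m (0 - z) \<le> log_kernel m z"
      unfolding L_z L_neg_z using ln_one_minus_add_two_le[OF u] by (intro mult_left_mono) auto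
    show "log_kernel m z \<le> log_kernel m (z - z)"
      unfolding L_z using ln_add_one_self_le_self[OF u(1)] by (simp add: mult_nonneg_nonpos)
    show "continuous_on {0..z} (\<lambda>y. log_kernel m (y - z))"
      unfolding log_kernel_def using z m by (intro continuous_intros) auto
  qed (use z in auto)
  moreover have "y1 = y2"
    if "0 \<le> y1" "y1 \<le> z" "log_kernel m (y1 - z) = log_kernel m z"
       "0 \<le> y2" "y2 \<le> z" "log_kernel m (y2 - z) = log_kernel m z" for y1 y2
    using strict_mono_on_eqD[OF strict_mono_on_log_kernel[OF m(1)], of "y1 - z" "y2 - z"] that z m
    by auto
  ultimately have "\<exists>!y. 0 \<le> y \<and> y \<le> z \<and> f n (1 - z) = f n (1 + z - y)"
    using crossing by metis
  from theI'[OF this]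
  show "0 \<le> b n z" "b n z \<le> z" "log_kernel (n - 1) (b n z - z) = log_kernel (n - 1) z"
    using crossing unfolding b_def m_def by auto
qed

lemma b_compare:
  assumes "2 \<le> n" "0 \<le> z" "z < real n - 1" "0 \<le> \<beta>" "\<beta> \<le> z"
  shows "b n z \<le> \<beta> \<longleftrightarrow> log_kernel (n - 1) z \<le> log_kernel (n - 1) (\<beta> - z)"
    and "\<beta> \<le> b n z \<longleftrightarrow> log_kernel (n - 1) (\<beta> - z) \<le> log_kernel (n - 1) z"
proof -
  note spec = b_spec[OF assms(1-3)]
  have mono: "strict_mono_on {- real (n - 1)<..0} (log_kernel (n - 1))"
    using assms by (intro strict_mono_on_log_kernel) auto
  have "b n z - z \<in> {- real (n - 1)<..0}" "\<beta> - z \<in> {- real (n - 1)<..0}"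
    using spec assms by auto
  from strict_mono_on_less_eq[OF mono this] strict_mono_on_less_eq[OF mono this(2,1)]
  show "b n z \<le> \<beta> \<longleftrightarrow> log_kernel (n - 1) z \<le> log_kernel (n - 1) (\<beta> - z)"
    and "\<beta> \<le> b n z \<longleftrightarrow> log_kernel (n - 1) (\<beta> - z) \<le> log_kernel (n - 1) z"
    using spec(3) by auto
qed

lemma b_le_of_poly_le:
  assumes n: "2 \<le> n" and \<beta>: "0 \<le> \<beta>" "\<beta> \<le> z" and z: "z \<le> (real n - 1) / 2"
  defines "u \<equiv> z / (real n - 1)" and "w \<equiv> (z - \<beta>) / (real n - 1)"
  assumes poly: "w^2/2 + w^3/3 + w^4/2 \<le> u^2/2 - u^3/3"
  shows "b n z \<le> \<beta>"
proof -
  have m: "1 \<le> real n - 1" "real (n - 1) = real n - 1" using n by auto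
  have uw: "0 \<le> u" "0 \<le> w" "w \<le> 1/2" using \<beta> z m by (auto simp: u_def w_def field_simps)
  have "log_kernel (n - 1) z = (real n - 1) * (ln (1 + u) - u)"
    using log_kernel_eq_ln[of "n - 1" z] m \<beta> by (simp add: u_def)
  also have "\<dots> \<le> (real n - 1) * (ln (1 - w) + w)"
    using ln_one_plus_le_cubic[of u] ln_one_minus_ge_quartic[of w] uw poly m
    by (intro mult_left_mono) auto
  also have "\<dots> = log_kernel (n - 1) (\<beta> - z)"
    using log_kernel_eq_ln[of "n - 1" "\<beta> - z"] m \<beta> z by (simp add: w_def field_simps)
  finally show ?thesis using b_compare(1)[of n z \<beta>] n \<beta> z m by simp
qed

lemma b_ge_of_poly_ge:
  assumes n: "2 \<le> n" and \<beta>: "0 \<le> \<beta>" "\<beta> \<le> z" and z: "z \<le> (real n - 1) / 2"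
  defines "u \<equiv> z / (real n - 1)" and "w \<equiv> (z - \<beta>) / (real n - 1)"
  assumes poly: "u^2/2 - u^3/3 + u^4/4 \<le> w^2/2 + w^3/3"
  shows "\<beta> \<le> b n z"
proof -
  have m: "1 \<le> real n - 1" "real (n - 1) = real n - 1" using n by auto
  have uw: "0 \<le> u" "0 \<le> w" "w \<le> 1/2" using \<beta> z m by (auto simp: u_def w_def field_simps)
  have "ln (1 + - w) \<le> - w - w^2/2 - w^3/3"
    using ln_one_plus_le_cubic[of "- w"] uw by simp
  have "log_kernel (n - 1) (\<beta> - z) = (real n - 1) * (ln (1 - w) + w)"
    using log_kernel_eq_ln[of "n - 1" "\<beta> - z"] m \<beta> z by (simp add: w_def field_simps)
  also have "\<dots> \<le> (real n - 1) * (ln (1 + u) - u)"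
    using \<open>ln (1 + - w) \<le> _\<close> ln_one_plus_ge_quartic[of u] uw poly m
    by (intro mult_left_mono) auto
  also have "\<dots> = log_kernel (n - 1) z"
    using log_kernel_eq_ln[of "n - 1" z] m \<beta> by (simp add: u_def)
  finally show ?thesis using b_compare(2)[of n z \<beta>] n \<beta> z m by simp
qed

lemma power_Suc_le_mult:
  fixes u c :: real
  assumes "0 \<le> u" "u \<le> c"
  shows "u ^ Suc k \<le> c * u ^ k"
  using mult_right_mono[OF assms(2), of "u ^ k"] assms(1) by simp

lemma b_le_third:
  assumes n: "20 \<le> n" and z: "0 \<le> z" "z \<le> real n / 10"
  shows "b n z \<le> z / 3"
proof -
  define u where "u = z / (real n - 1)"
  have u: "0 \<le> u" "u \<le> 2/19" using n z by (auto simp: u_def field_simps)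
  note pw = power_Suc_le_mult[OF u]
  have w: "(z - z / 3) / (real n - 1) = 2/3 * u" by (simp add: u_def field_simps)
  have "u^2/2 - u^3/3 - ((2/3*u)^2/2 + (2/3*u)^3/3 + (2/3*u)^4/2)
      = 5/18 * u^2 - 35/81 * u^3 - 8/81 * u^4"
    by (simp add: field_simps eval_nat_numeral)
  moreover have "0 \<le> u^3" "0 \<le> u^4" using u by simp_all
  ultimately have poly: "(2/3*u)^2/2 + (2/3*u)^3/3 + (2/3*u)^4/2 \<le> u^2/2 - u^3/3"
    using pw[of 2, simplified] pw[of 3, simplified] by linarith
  show ?thesis
    using b_le_of_poly_le[of n "z / 3" z, folded u_def, unfolded w] n z poly by simp
qed

lemma b_le_approx:
  assumes n: "20 \<le> n" and z: "0 \<le> z" "z \<le> real n / 10"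
  shows "b n z \<le> 2 * z^2 / (3 * (real n - 1)) + 2 * z^3 / (real n - 1)^2"
proof (cases "z \<le> 2 * z^2 / (3 * (real n - 1)) + 2 * z^3 / (real n - 1)^2")
  case True
  then show ?thesis using b_spec(2)[of n z] n z by simp
next
  case False
  define m where "m = real n - 1"
  have "0 < m" using n by (simp add: m_def)
  define \<beta> where "\<beta> = 2 * z^2 / (3 * m) + 2 * z^3 / m^2"
  define u where "u = z / m"
  have u: "0 \<le> u" "u \<le> 2/19" using n z by (auto simp: u_def m_def field_simps)
  note pw = power_Suc_le_mult[OF u]
  define w where "w = u - 2/3 * u^2 - 2 * u^3"
  have w: "(z - \<beta>) / m = w"
    using \<open>0 < m\<close> by (simp add: \<beta>_def u_def w_def field_simps eval_nat_numeral)
  have "u^2/2 - u^3/3 - (w^2/2 + w^3/3 + w^4/2)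
      = 35/18 * u^4 + 14/9 * u^5 - 154/81 * u^6 - 284/27 * u^7 - 332/81 * u^8
        + 472/27 * u^9 + 32/3 * u^10 - 32/3 * u^11 - 8 * u^12"
    by (simp add: w_def field_simps eval_nat_numeral)
  moreover have "0 \<le> u^4" "0 \<le> u^5" "0 \<le> u^6" "0 \<le> u^7" "0 \<le> u^8" "0 \<le> u^9"
    "0 \<le> u^10" "0 \<le> u^11" "0 \<le> u^12" using u by simp_all
  ultimately have poly: "w^2/2 + w^3/3 + w^4/2 \<le> u^2/2 - u^3/3"
    using pw[of 4, simplified] pw[of 5, simplified] pw[of 6, simplified] pw[of 7, simplified]
      pw[of 8, simplified] pw[of 9, simplified] pw[of 10, simplified] pw[of 11, simplified]
    by linarith
  have "0 \<le> \<beta>" using z \<open>0 < m\<close> by (simp add: \<beta>_def)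
  then show ?thesis
    using b_le_of_poly_le[of n \<beta> z, folded m_def, folded u_def, unfolded w] n z poly False
    by (simp add: \<beta>_def m_def)
qed

lemma b_ge_approx:
  assumes n: "20 \<le> n" and z: "0 \<le> z" "z \<le> real n / 10"
  shows "2 * z^2 / (3 * (real n - 1)) - 2 * z^3 / (real n - 1)^2 \<le> b n z"
proof (cases "2 * z^2 / (3 * (real n - 1)) - 2 * z^3 / (real n - 1)^2 \<le> 0")
  case True
  then show ?thesis using b_spec(1)[of n z] n z by simp
next
  case False
  define m where "m = real n - 1"
  have "0 < m" using n by (simp add: m_def)
  define \<beta> where "\<beta> = 2 * z^2 / (3 * m) - 2 * z^3 / m^2"
  define u where "u = z / m"
  have u: "0 \<le> u" "u \<le> 2/19" using n z by (auto simp: u_def m_def field_simps)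
  note pw = power_Suc_le_mult[OF u]
  define w where "w = u - 2/3 * u^2 + 2 * u^3"
  have w: "(z - \<beta>) / m = w"
    using \<open>0 < m\<close> by (simp add: \<beta>_def u_def w_def field_simps eval_nat_numeral)
  have "w^2/2 + w^3/3 - (u^2/2 - u^3/3 + u^4/4)
      = 47/36 * u^4 + 10/9 * u^5 - 62/81 * u^6 + 44/9 * u^7 - 8/3 * u^8 + 8/3 * u^9"
    by (simp add: w_def field_simps eval_nat_numeral)
  moreover have "0 \<le> u^4" "0 \<le> u^5" "0 \<le> u^6" "0 \<le> u^7" "0 \<le> u^8" "0 \<le> u^9"
    using u by simp_all
  ultimately have poly: "u^2/2 - u^3/3 + u^4/4 \<le> w^2/2 + w^3/3"
    using pw[of 4, simplified] pw[of 5, simplified] pw[of 6, simplified] pw[of 7, simplified]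
      pw[of 8, simplified]
    by linarith
  have "z * (2 * z) \<le> z * (3 * m)" using z n by (intro mult_left_mono) (auto simp: m_def)
  then have "2 * z^2 / (3 * m) \<le> z" using \<open>0 < m\<close> by (simp add: power2_eq_square field_simps)
  moreover have "0 \<le> 2 * z^3 / m^2" using z by simp
  ultimately have "\<beta> \<le> z" unfolding \<beta>_def by linarith
  then show ?thesis
    using b_ge_of_poly_ge[of n \<beta> z, folded m_def, folded u_def, unfolded w] n z poly False
    by (simp add: \<beta>_def m_def)
qed

lemma b_approx:
  assumes n: "20 \<le> n" and z: "0 \<le> z" "z \<le> real n / 10"
  shows "\<bar>b n z - 2 * z^2 / (3 * (real n - 1))\<bar> \<le> 3 * z^3 / (real n)^2"
proof -
  have "6 * real n \<le> real n * real n" using n by (intro mult_right_mono) auto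
  then have "2 * (real n)^2 \<le> 3 * (real n - 1)^2" by (simp add: power2_eq_square algebra_simps)
  then have "2 / (real n - 1)^2 \<le> 3 / (real n)^2"
    using n by (simp add: field_simps)
  then have "2 / (real n - 1)^2 * z^3 \<le> 3 / (real n)^2 * z^3"
    using z by (intro mult_right_mono) auto
  then show ?thesis using b_le_approx[OF assms] b_ge_approx[OF assms] by (simp add: abs_le_iff)
qed

theorem lemma6:
  shows "\<exists>C::real. C > 0 \<and>
    (\<forall>(n::nat) (z::real). n \<ge> 20 \<and> 0 \<le> z \<and> z \<le> real n / 10 \<longrightarrow>
        b n z \<le> z / 3 \<and>
        \<bar>b n z - 2 * z^2 / (3 * (real n - 1))\<bar> \<le> C * z^3 / (real n)^2) \<and>
    (\<forall>(n::nat) (x::real). n \<ge> 1 \<and> \<bar>x\<bar> \<le> real n / 3 \<longrightarrow>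
        (1 / C) * (1 / sqrt (real n)) * exp (- (x^2) / real n) \<le> f n x \<and>
        f n x \<le> C * (1 / sqrt (real n)) * exp (- (x^2) / (3 * real n))) \<and>
    (\<forall>(x::real) (h::nat) (H::nat). 1 \<le> h \<and> h \<le> H \<and> real H \<le> 10 * x^2 \<longrightarrow>
        f h x / (real h)^2 \<le> C * f H x / (real H)^2) \<and>
    (\<forall>(k::nat) (n::nat) (x::real). 1 \<le> k \<and> k \<le> n \<longrightarrow>
        f k x \<le> C * sqrt (real n / real k) * f n x)"
proof (intro exI[of _ "5 * 960^6"] conjI allI impI)
  show "(0::real) < 5 * 960^6" by simp
next
  fix n :: nat and z :: real
  assume "20 \<le> n \<and> 0 \<le> z \<and> z \<le> real n / 10"
  then show "b n z \<le> z / 3"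
    and "\<bar>b n z - 2 * z^2 / (3 * (real n - 1))\<bar> \<le> 5 * 960^6 * z^3 / (real n)^2"
    using b_le_third b_approx[of n z] divide_right_mono[of "3 * z^3" "5 * 960^6 * z^3" "(real n)^2"]
    by auto
next
  fix n :: nat and x :: real
  assume "1 \<le> n \<and> \<bar>x\<bar> \<le> real n / 3"
  then have n: "1 \<le> n" and x: "\<bar>x\<bar> \<le> real n / 3" by auto
  have "1 / (5 * 960^6) * (1 / sqrt (real n)) * exp (- (x^2) / real n)
      \<le> 1/4 * (1 / sqrt (real n)) * exp (- (x^2) / real n)"
    and "3/2 * (1 / sqrt (real n)) * exp (- (x^2) / (3 * real n))
      \<le> 5 * 960^6 * (1 / sqrt (real n)) * exp (- (x^2) / (3 * real n))"
    by (intro mult_right_mono; simp)+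
  then show "1 / (5 * 960^6) * (1 / sqrt (real n)) * exp (- (x^2) / real n) \<le> f n x"
    and "f n x \<le> 5 * 960^6 * (1 / sqrt (real n)) * exp (- (x^2) / (3 * real n))"
    using f_gaussian_bounds[OF n x] by linarith+
next
  fix x :: real and h H :: nat
  assume "1 \<le> h \<and> h \<le> H \<and> real H \<le> 10 * x^2"
  then show "f h x / (real h)^2 \<le> 5 * 960^6 * f H x / (real H)^2" using f_div_square_le by auto
next
  fix k n :: nat and x :: real
  assume "1 \<le> k \<and> k \<le> n"
  then have "f k x \<le> 5 * sqrt (real n / real k) * f n x" by (intro f_le_sqrt_ratio) auto
  also have "\<dots> \<le> 5 * 960^6 * sqrt (real n / real k) * f n x"
    using f_nonneg[of n x] by (intro mult_right_mono) auto
  finally show "f k x \<le> 5 * 960^6 * sqrt (real n / real k) * f n x" .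
qed

end
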